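(* Let $m\ge 2$ and let $t,r_2$ be integers with $t\ge 0$ and $0\le r_2\le \lfloor\frac{m-1}{2}\rfloor-t$. Put $C_1=\mathrm{RM}(\lfloor\frac{m-1}{2}\rfloor-t,m)$ and $C_2=\mathrm{RM}(r_2,m)$ (so that $C_2\subseteq C_1$). Then $(C_1,C_2)$ is a binary CSS-$T$ pair if and only if $$\begin{cases} r_2\le 2t+1 & \text{if } m \text{ is even},\\ r_2\le 2t & \text{if } m \text{ is odd}.\end{cases}$$
   Context: $\mathrm{RM}(r,m)\subseteq\mathbb F_2^{2^m}$ is the binary Reed–Muller code of order $r$: the set of evaluation vectors, at all points of $\mathbb F_2^m$ in a fixed order, of polynomials in $\mathbb F_2[x_1,\dots,x_m]$ of degree at most $r$. The Hamming weight $\omega^{\mathrm H}(x)$ is the number of nonzero coordinates of $x$; $C^\perp$ is the dual with respect to the standard inner product. A pair of binary linear codes $(C_1,C_2)$ with $C_2\subseteq C_1\subseteq\mathbb F_2^n$ is a binary CSS-$T$ pair if (i) every $x\in C_2$ has even Hamming weight, and (ii) for every $x\in C_2$ there exists a linear code $C_x\subseteq C_1^\perp$ of dimension $\omega^{\mathrm H}(x)/2$ which is supported on $x$ (every $y\in C_x$ has $y_i=0$ whenever $x_i=0$) and is self-dual when regarded as a code of length $\omega^{\mathrm H}(x)$ on the support of $x$. *)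

theory Defs
  imports Main "HOL-Library.Z2" "HOL-Library.Function_Algebras"
begin

text \<open>Binary vectors are functions into the field bit = GF(2), indexed by a
  finite coordinate set I (values outside I are 0).\<close>

definition vecs :: "'i set \<Rightarrow> ('i \<Rightarrow> bit) set" where
  "vecs I = {x. \<forall>i. i \<notin> I \<longrightarrow> x i = 0}"

definition supp :: "('i \<Rightarrow> bit) \<Rightarrow> 'i set" where
  "supp x = {i. x i \<noteq> 0}"

definition hw :: "('i \<Rightarrow> bit) \<Rightarrow> nat" where
  "hw x = card (supp x)"

definition lin_code :: "'i set \<Rightarrow> ('i \<Rightarrow> bit) set \<Rightarrow> bool" where
  "lin_code I C \<longleftrightarrow> C \<subseteq> vecs I \<and> 0 \<in> C \<and>
     (\<forall>x\<in>C. \<forall>y\<in>C. x + y \<in> C) \<and> (\<forall>a::bit. \<forall>x\<in>C. (\<lambda>i. a * x i) \<in> C)"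

definition ip :: "'i set \<Rightarrow> ('i \<Rightarrow> bit) \<Rightarrow> ('i \<Rightarrow> bit) \<Rightarrow> bit" where
  "ip I x y = (\<Sum>i\<in>I. x i * y i)"

definition dual :: "'i set \<Rightarrow> ('i \<Rightarrow> bit) set \<Rightarrow> ('i \<Rightarrow> bit) set" where
  "dual I C = {y \<in> vecs I. \<forall>x\<in>C. ip I x y = 0}"

definition span2 :: "('i \<Rightarrow> bit) set \<Rightarrow> ('i \<Rightarrow> bit) set" where
  "span2 B = {(\<Sum>b\<in>B. (\<lambda>i. c b * b i)) | c. True}"

definition indep2 :: "('i \<Rightarrow> bit) set \<Rightarrow> bool" where
  "indep2 B \<longleftrightarrow> (\<forall>c. (\<Sum>b\<in>B. (\<lambda>i. c b * b i)) = 0 \<longrightarrow> (\<forall>b\<in>B. c b = 0))"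

definition has_dim :: "('i \<Rightarrow> bit) set \<Rightarrow> nat \<Rightarrow> bool" where
  "has_dim C k \<longleftrightarrow> (\<exists>B. finite B \<and> B \<subseteq> C \<and> card B = k \<and> indep2 B \<and> span2 B = C)"

definition css_t_pair :: "'i set \<Rightarrow> ('i \<Rightarrow> bit) set \<Rightarrow> ('i \<Rightarrow> bit) set \<Rightarrow> bool" where
  "css_t_pair I C1 C2 \<longleftrightarrow>
     lin_code I C1 \<and> lin_code I C2 \<and> C2 \<subseteq> C1 \<and>
     (\<forall>x\<in>C2. even (hw x)) \<and>
     (\<forall>x\<in>C2. \<exists>Cx. lin_code I Cx \<and> Cx \<subseteq> dual I C1 \<and> has_dim Cx (hw x div 2) \<and>
        Cx \<subseteq> vecs (supp x) \<and> dual (supp x) Cx = Cx)"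

text \<open>Points of GF(2)^m: functions nat => bit vanishing at indices >= m.\<close>
definition pts :: "nat \<Rightarrow> (nat \<Rightarrow> bit) set" where
  "pts m = {p. \<forall>i\<ge>m. p i = 0}"

text \<open>Exponent vectors of monomials in x_0..x_(m-1) of total degree at most r.\<close>
definition rm_monos :: "nat \<Rightarrow> nat \<Rightarrow> (nat \<Rightarrow> nat) set" where
  "rm_monos m r = {e. (\<forall>i\<ge>m. e i = 0) \<and> (\<Sum>i<m. e i) \<le> r}"

text \<open>Coordinates are indexed by the points themselves.\<close>
definition RM :: "nat \<Rightarrow> nat \<Rightarrow> ((nat \<Rightarrow> bit) \<Rightarrow> bit) set" where
  "RM r m = {f. \<exists>c :: (nat \<Rightarrow> nat) \<Rightarrow> bit.
      f = (\<lambda>p. if p \<in> pts m then (\<Sum>e\<in>rm_monos m r. c e * (\<Prod>i<m. p i ^ e i)) else 0)}"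

end

theory Submission
  imports Defs "HOL-Library.Disjoint_Sets"
begin

(*
  A CSS-T pair is governed by the Schur square of C1: (C1, C2) is a CSS-T pair iff the words of C2
  have even weight and are orthogonal to every componentwise product c * c' of words of C1.
  Indeed, for x in C2 the code x * C1, read on supp x, is then self-orthogonal, and in even length
  a maximal self-orthogonal code contains the all-ones word and is therefore self-dual; it serves
  as C_x. Conversely, a self-dual C_x inside the dual of C1 must contain x * C1.
  For Reed-Muller codes x * c * c' lies in RM(r2 + 2 r1, m). If r2 + 2 r1 < m, every monomial of
  such a word misses a variable, so its coordinates sum to 0; if r2 + 2 r1 >= m, three monomials
  of degrees at most r2, r1, r1 multiply to x_1 ... x_m, whose coordinates sum to 1. With
  r1 = (m - 1) div 2 - t the condition r2 + 2 r1 < m is the stated parity condition.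
*)

subsection \<open>Binary vectors and the standard inner product\<close>

(* Otherwise simp turns + and * on bit into XOR and AND. *)
declare mult_bit_eq_and [simp del] add_bit_eq_xor [simp del]

lemma bit_add_self [simp]: "(a::bit) + a = 0"
  by (cases a) auto

lemma bit_mult_self [simp]: "(a::bit) * a = a"
  by (cases a) auto

lemma fun_bit_add_self [simp]: "(x::'i \<Rightarrow> bit) + x = 0"
  by (simp add: fun_eq_iff)

lemma fun_bit_add_add_cancel [simp]: "(x::'i \<Rightarrow> bit) + y + y = x"
  by (simp add: add.assoc)

lemma fun_bit_add_eq_0_iff: "(x::'i \<Rightarrow> bit) + y = 0 \<longleftrightarrow> x = y"
  by (metis add_diff_cancel_left' diff_add_cancel fun_bit_add_self)

lemma of_nat_bit_eq_0_iff [simp]: "(of_nat n :: bit) = 0 \<longleftrightarrow> even n"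
  by (induction n) auto

lemma sum_fun_apply: "(\<Sum>a\<in>A. f a) i = (\<Sum>a\<in>A. f a i)"
  by (induction A rule: infinite_finite_induct) auto

lemma zero_in_vecs [simp]: "0 \<in> vecs S"
  by (simp add: vecs_def)

lemma vecs_add: "x \<in> vecs S \<Longrightarrow> y \<in> vecs S \<Longrightarrow> x + y \<in> vecs S"
  by (simp add: vecs_def)

lemma vecs_mono: "S \<subseteq> T \<Longrightarrow> vecs S \<subseteq> vecs T"
  by (auto simp: vecs_def)

lemma supp_subset_iff_vecs: "supp x \<subseteq> S \<longleftrightarrow> x \<in> vecs S"
  by (auto simp: supp_def vecs_def)

lemma times_in_vecs_supp: "x * y \<in> vecs (supp x)"
  by (simp add: vecs_def supp_def)

lemma bij_betw_supp_vecs_Pow: "bij_betw supp (vecs S) (Pow S)"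
  by (rule bij_betw_byWitness[where f' = "\<lambda>T i. if i \<in> T then 1 else 0"])
     (auto simp: vecs_def supp_def fun_eq_iff)

lemma finite_vecs: "finite S \<Longrightarrow> finite (vecs S)"
  using bij_betw_finite[OF bij_betw_supp_vecs_Pow] finite_Pow_iff by blast

lemma card_vecs: "finite S \<Longrightarrow> card (vecs S) = 2 ^ card S"
  using bij_betw_same_card[OF bij_betw_supp_vecs_Pow[of S]] by (simp add: card_Pow)

lemma sum_eq_of_nat_hw:
  assumes "finite I" "x \<in> vecs I"
  shows "(\<Sum>i\<in>I. x i) = of_nat (hw x)"
proof -
  have "(\<Sum>i\<in>I. x i) = (\<Sum>i\<in>supp x. x i)"
    using assms by (intro sum.mono_neutral_right) (auto simp: supp_def vecs_def)
  also have "\<dots> = (\<Sum>i\<in>supp x. 1)"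
    by (intro sum.cong) (auto simp: supp_def)
  finally show ?thesis
    by (simp add: hw_def)
qed

lemma ip_comm: "ip I x y = ip I y x"
  by (simp add: ip_def mult.commute)

lemma ip_add_left: "ip I (x + y) z = ip I x z + ip I y z"
  by (simp add: ip_def sum.distrib distrib_right)

lemma ip_add_right: "ip I z (x + y) = ip I z x + ip I z y"
  by (simp add: ip_def sum.distrib distrib_left)

lemma ip_zero_left [simp]: "ip I 0 y = 0"
  by (simp add: ip_def)

lemma ip_zero_right [simp]: "ip I y 0 = 0"
  by (simp add: ip_def)

lemma ip_sum_left: "ip I (\<Sum>a\<in>A. f a) y = (\<Sum>a\<in>A. ip I (f a) y)"
  unfolding ip_def by (simp add: sum_fun_apply sum_distrib_right) (rule sum.swap)

lemma ip_scale_left: "ip I (\<lambda>i. c * x i) y = c * ip I x y"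
  by (simp add: ip_def sum_distrib_left mult.assoc)

lemma ip_all_ones: "ip I x (\<lambda>i. if i \<in> I then 1 else 0) = ip I x x"
  by (simp add: ip_def)

lemma ip_vecs_subset:
  assumes "finite T" "S \<subseteq> T" "z \<in> vecs S"
  shows "ip T y z = ip S y z"
  unfolding ip_def using assms by (intro sum.mono_neutral_right) (auto simp: vecs_def)

lemma ip_supp_times_left: "ip (supp x) (x * y) z = ip (supp x) y z"
  unfolding ip_def by (intro sum.cong) (auto simp: supp_def)

lemma ip_supp_times: "ip (supp x) (x * y) (x * z) = ip (supp x) y z"
  by (metis ip_comm ip_supp_times_left)

lemma ip_supp_eq_ip_times:
  assumes "finite I" "x \<in> vecs I"
  shows "ip (supp x) y z = ip I x (y * z)"
proof -
  have "ip I x (y * z) = (\<Sum>i\<in>supp x. x i * (y * z) i)"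
    unfolding ip_def using assms by (intro sum.mono_neutral_right) (auto simp: supp_def vecs_def)
  also have "\<dots> = ip (supp x) y z"
    unfolding ip_def by (intro sum.cong) (auto simp: supp_def)
  finally show ?thesis ..
qed

lemma lin_codeI:
  assumes "D \<subseteq> vecs S" "0 \<in> D" "\<And>x y. x \<in> D \<Longrightarrow> y \<in> D \<Longrightarrow> x + y \<in> D"
  shows "lin_code S D"
proof -
  have "(\<lambda>i. a * x i) \<in> D" if "x \<in> D" for a :: bit and x
    using that assms(2) by (cases "a = 0") (simp_all add: zero_fun_def)
  then show ?thesis
    using assms unfolding lin_code_def by blast
qed

lemma lin_code_subset_vecs: "lin_code S D \<Longrightarrow> D \<subseteq> vecs S"
  by (simp add: lin_code_def)

lemma lin_code_zero: "lin_code S D \<Longrightarrow> 0 \<in> D"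
  by (simp add: lin_code_def)

lemma lin_code_add: "lin_code S D \<Longrightarrow> x \<in> D \<Longrightarrow> y \<in> D \<Longrightarrow> x + y \<in> D"
  by (simp add: lin_code_def)

lemma lin_code_sum: "lin_code S D \<Longrightarrow> (\<And>a. a \<in> A \<Longrightarrow> f a \<in> D) \<Longrightarrow> (\<Sum>a\<in>A. f a) \<in> D"
  by (induction A rule: infinite_finite_induct) (simp_all add: lin_code_zero lin_code_add)

lemma lin_code_mono: "lin_code S D \<Longrightarrow> S \<subseteq> T \<Longrightarrow> lin_code T D"
  using vecs_mono unfolding lin_code_def by blast

lemma finite_lin_code: "finite S \<Longrightarrow> lin_code S D \<Longrightarrow> finite D"
  using finite_subset[OF lin_code_subset_vecs finite_vecs] .

lemma card_Un_translate:
  fixes D :: "('i \<Rightarrow> bit) set"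
  assumes "finite D" "\<And>a b. a \<in> D \<Longrightarrow> b \<in> D \<Longrightarrow> a + b \<in> D" "y \<notin> D"
  shows "card (D \<union> (\<lambda>d. d + y) ` D) = 2 * card D"
proof -
  have "D \<inter> (\<lambda>d. d + y) ` D = {}"
    using assms(2,3) by (auto simp: add.assoc[symmetric]) (metis add.commute fun_bit_add_add_cancel)
  moreover have "card ((\<lambda>d. d + y) ` D) = card D"
    by (rule card_image) (simp add: inj_on_def)
  ultimately show ?thesis
    using assms(1) by (simp add: card_Un_disjoint)
qed

subsection \<open>Spans, independence and bases over GF(2)\<close>

definition lincomb :: "('i \<Rightarrow> bit) set \<Rightarrow> (('i \<Rightarrow> bit) \<Rightarrow> bit) \<Rightarrow> 'i \<Rightarrow> bit" where
  "lincomb B c = (\<Sum>b\<in>B. (\<lambda>i. c b * b i))"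

lemma span2_eq_range_lincomb: "span2 B = range (lincomb B)"
  by (auto simp: span2_def lincomb_def)

lemma indep2_iff_lincomb: "indep2 B \<longleftrightarrow> (\<forall>c. lincomb B c = 0 \<longrightarrow> (\<forall>b\<in>B. c b = 0))"
  by (simp add: indep2_def lincomb_def)

lemma lincomb_insert:
  "finite B \<Longrightarrow> v \<notin> B \<Longrightarrow> lincomb (insert v B) c = (\<lambda>i. c v * v i) + lincomb B c"
  by (simp add: lincomb_def)

lemma lincomb_fun_upd: "v \<notin> B \<Longrightarrow> lincomb B (c(v := a)) = lincomb B c"
  unfolding lincomb_def by (intro sum.cong) auto

lemma lincomb_zero: "lincomb B (\<lambda>_. 0) = 0"
  by (simp add: lincomb_def zero_fun_def[symmetric])

lemma lincomb_add: "lincomb B (\<lambda>b. c1 b + c2 b) = lincomb B c1 + lincomb B c2"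
proof -
  have "(\<lambda>i. (c1 b + c2 b) * b i) = (\<lambda>i. c1 b * b i) + (\<lambda>i. c2 b * b i)" for b
    by (simp add: fun_eq_iff distrib_right)
  then show ?thesis
    by (simp add: lincomb_def sum.distrib)
qed

lemma span2_zero: "0 \<in> span2 B"
  by (metis lincomb_zero rangeI span2_eq_range_lincomb)

lemma span2_add: "x \<in> span2 B \<Longrightarrow> y \<in> span2 B \<Longrightarrow> x + y \<in> span2 B"
  by (auto simp: span2_eq_range_lincomb lincomb_add[symmetric])

lemma span2_empty [simp]: "span2 {} = {0}"
  by (simp add: span2_def)

lemma indep2_empty [simp]: "indep2 {}"
  by (simp add: indep2_def)

lemma span2_insert:
  assumes "finite B" "v \<notin> B"
  shows "span2 (insert v B) = span2 B \<union> (\<lambda>s. s + v) ` span2 B"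
proof -
  have "lincomb (insert v B) c \<in> span2 B \<union> (\<lambda>s. s + v) ` span2 B" for c
  proof (cases "c v = 0")
    case True
    then show ?thesis
      using assms by (simp add: lincomb_insert span2_eq_range_lincomb zero_fun_def[symmetric])
  next
    case False
    then have "lincomb (insert v B) c = lincomb B c + v"
      using assms by (simp add: lincomb_insert add.commute)
    then show ?thesis
      by (simp add: span2_eq_range_lincomb)
  qed
  moreover have "(\<lambda>i. a * v i) + lincomb B c = lincomb (insert v B) (c(v := a))" for a c
    using assms by (simp add: lincomb_insert lincomb_fun_upd)
  from this[of 0] this[of 1]
  have "span2 B \<union> (\<lambda>s. s + v) ` span2 B \<subseteq> span2 (insert v B)"
    by (auto simp: span2_eq_range_lincomb add.commute zero_fun_def[symmetric])
  ultimately show ?thesis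
    by (auto simp: span2_eq_range_lincomb)
qed

lemma span2_superset:
  assumes "finite B"
  shows "B \<subseteq> span2 B"
proof
  fix v assume "v \<in> B"
  then have "span2 B = span2 (B - {v}) \<union> (\<lambda>s. s + v) ` span2 (B - {v})"
    using span2_insert[of "B - {v}" v] assms by (simp add: insert_absorb)
  then show "v \<in> span2 B"
    using span2_zero[of "B - {v}"] by force
qed

lemma finite_span2: "finite B \<Longrightarrow> finite (span2 B)"
  by (induction B rule: finite_induct) (simp_all add: span2_insert)

lemma span2_subset:
  assumes "finite B" "B \<subseteq> D" "lin_code S D"
  shows "span2 B \<subseteq> D"
  using assms
  by (induction B rule: finite_induct) (auto simp: span2_insert lin_code_zero lin_code_add)

lemma indep2_insert:
  assumes "finite B" "v \<notin> B"
  shows "indep2 (insert v B) \<longleftrightarrow> indep2 B \<and> v \<notin> span2 B"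
proof
  assume indep: "indep2 (insert v B)"
  have "c b = 0" if "lincomb B c = 0" "b \<in> B" for c b
  proof -
    have "lincomb (insert v B) (c(v := 0)) = 0"
      using that(1) assms by (simp add: lincomb_insert lincomb_fun_upd zero_fun_def)
    then have "(c(v := 0)) b = 0"
      using indep that(2) unfolding indep2_iff_lincomb by blast
    then show ?thesis
      using that(2) assms(2) by (auto split: if_splits)
  qed
  moreover have "lincomb B c \<noteq> v" for c
  proof
    assume "lincomb B c = v"
    then have "lincomb (insert v B) (c(v := 1)) = 0"
      using assms by (simp add: lincomb_insert lincomb_fun_upd)
    then have "(c(v := 1)) v = 0"
      using indep unfolding indep2_iff_lincomb by blast
    then show False
      by simp
  qed
  ultimately show "indep2 B \<and> v \<notin> span2 B"
    unfolding indep2_iff_lincomb span2_eq_range_lincomb by blast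
next
  assume indep: "indep2 B \<and> v \<notin> span2 B"
  have "\<forall>b\<in>insert v B. c b = 0" if c: "lincomb (insert v B) c = 0" for c
  proof -
    have "c v = 0"
    proof (rule ccontr)
      assume "c v \<noteq> 0"
      then have "v = lincomb B c"
        using c assms by (simp add: lincomb_insert fun_bit_add_eq_0_iff)
      then show False
        using indep by (simp add: span2_eq_range_lincomb)
    qed
    moreover from this have "lincomb B c = 0"
      using c assms by (simp add: lincomb_insert zero_fun_def[symmetric])
    ultimately show ?thesis
      using indep unfolding indep2_iff_lincomb by blast
  qed
  then show "indep2 (insert v B)"
    unfolding indep2_iff_lincomb by blast
qed

lemma card_span2:
  assumes "finite B" "indep2 B"
  shows "card (span2 B) = 2 ^ card B"
  using assms
proof (induction B rule: finite_induct)
  case empty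
  then show ?case by simp
next
  case (insert v B)
  then have "indep2 B" "v \<notin> span2 B"
    using indep2_insert by blast+
  then show ?case
    using insert card_Un_translate[OF finite_span2[OF insert(1)] span2_add] by (simp add: span2_insert)
qed

lemma lin_code_has_basis:
  assumes "finite S" "lin_code S D"
  shows "\<exists>B. finite B \<and> B \<subseteq> D \<and> indep2 B \<and> span2 B = D"
proof -
  have fin: "finite D"
    using assms by (rule finite_lin_code)
  have "\<exists>B. (B \<subseteq> D \<and> indep2 B) \<and> (\<forall>B'. B' \<subseteq> D \<and> indep2 B' \<longrightarrow> card B' \<le> card B)"
    by (rule ex_has_greatest_nat[of _ "{}" _ "Suc (card D)"])
       (auto simp: le_imp_less_Suc card_mono[OF fin])
  then obtain B where B: "B \<subseteq> D" "indep2 B"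
    and max: "\<And>B'. B' \<subseteq> D \<Longrightarrow> indep2 B' \<Longrightarrow> card B' \<le> card B"
    by blast
  have finB: "finite B"
    using B(1) fin finite_subset by blast
  have "D \<subseteq> span2 B"
  proof
    fix v assume "v \<in> D"
    show "v \<in> span2 B"
    proof (rule ccontr)
      assume v: "v \<notin> span2 B"
      then have "v \<notin> B"
        using span2_superset[OF finB] by blast
      then have "card (insert v B) \<le> card B"
        using max[of "insert v B"] B \<open>v \<in> D\<close> v indep2_insert[OF finB] by blast
      then show False
        using finB \<open>v \<notin> B\<close> by simp
    qed
  qed
  then show ?thesis
    using finB B span2_subset[OF finB B(1) assms(2)] by blast
qed

subsection \<open>Duality\<close>

lemma dual_antimono: "C \<subseteq> C' \<Longrightarrow> dual S C' \<subseteq> dual S C"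
  by (auto simp: dual_def)

lemma dual_add: "x \<in> dual S C \<Longrightarrow> y \<in> dual S C \<Longrightarrow> x + y \<in> dual S C"
  by (simp add: dual_def vecs_add ip_add_right)

lemma finite_dual: "finite S \<Longrightarrow> finite (dual S C)"
  unfolding dual_def by (simp add: finite_vecs)

lemma dual_span2:
  assumes "finite B"
  shows "dual S (span2 B) = dual S B"
proof
  show "dual S (span2 B) \<subseteq> dual S B"
    using dual_antimono[OF span2_superset[OF assms]] .
  show "dual S B \<subseteq> dual S (span2 B)"
    by (auto simp: dual_def span2_eq_range_lincomb lincomb_def ip_sum_left ip_scale_left)
qed

lemma dual_separates:
  assumes "finite S" "finite B" "B \<subseteq> vecs S" "v \<in> vecs S" "v \<notin> span2 B"
  shows "\<exists>y\<in>dual S B. ip S v y = 1"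
  using assms(2-5)
proof (induction B arbitrary: v rule: finite_induct)
  case empty
  then obtain k where k: "v k = 1"
    by (auto simp: fun_eq_iff)
  then have "k \<in> S"
    using empty(2) by (auto simp: vecs_def)
  then have "(\<lambda>i. if i = k then 1 else 0) \<in> dual S {}" "ip S v (\<lambda>i. if i = k then 1 else 0) = 1"
    using k assms(1) by (auto simp: dual_def vecs_def ip_def if_distrib cong: if_cong)
  then show ?case
    by blast
next
  case (insert b B)
  have "v \<notin> span2 B" "v + b \<notin> span2 B"
    using insert(6) by (auto simp: span2_insert[OF insert(1,2)] image_iff)
  moreover have "b \<in> vecs S" "B \<subseteq> vecs S"
    using insert(4) by auto
  ultimately obtain y1 y2 where y1: "y1 \<in> dual S B" "ip S v y1 = 1"
    and y2: "y2 \<in> dual S B" "ip S (v + b) y2 = 1"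
    using insert(3) insert(5) vecs_add by meson
  have y12: "y1 + y2 \<in> dual S B"
    using y1(1) y2(1) by (rule dual_add)
  consider "ip S b y1 = 0" | "ip S b y2 = 0" | "ip S b y1 = 1" "ip S b y2 = 1"
    using bit_not_zero_iff by blast
  then show ?case
  proof cases
    case 1
    then show ?thesis using y1 by (auto simp: dual_def)
  next
    case 2
    then show ?thesis using y2 by (auto simp: dual_def ip_add_left)
  next
    case 3
    then show ?thesis
      using y1 y2 y12 by (auto simp: dual_def ip_add_left ip_add_right)
  qed
qed

lemma card_dual:
  assumes "finite S" "finite B" "B \<subseteq> vecs S" "indep2 B"
  shows "card (dual S B) * 2 ^ card B = 2 ^ card S"
  using assms(2-4)
proof (induction B rule: finite_induct)
  case empty
  then show ?case
    using card_vecs[OF assms(1)] by (simp add: dual_def)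
next
  case (insert v B)
  then have v: "v \<in> vecs S" "v \<notin> span2 B" and B: "B \<subseteq> vecs S" "indep2 B"
    using indep2_insert by auto
  obtain y0 where y0: "y0 \<in> dual S B" "ip S v y0 = 1"
    using dual_separates[OF assms(1) insert(1) B(1) v] by blast
  have "dual S B = dual S (insert v B) \<union> (\<lambda>y. y + y0) ` dual S (insert v B)"
  proof (intro equalityI subsetI)
    fix y assume y: "y \<in> dual S B"
    show "y \<in> dual S (insert v B) \<union> (\<lambda>y. y + y0) ` dual S (insert v B)"
    proof (cases "ip S v y = 0")
      case True
      then show ?thesis
        using y by (auto simp: dual_def)
    next
      case False
      then have "y + y0 \<in> dual S (insert v B)"
        using y y0 by (auto simp: dual_def ip_add_right vecs_add)
      moreover have "y = y + y0 + y0"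
        by simp
      ultimately show ?thesis
        by blast
    qed
  qed (use y0 in \<open>auto simp: dual_def ip_add_right vecs_add\<close>)
  moreover have "y0 \<notin> dual S (insert v B)"
    using y0(2) by (auto simp: dual_def)
  ultimately have "card (dual S B) = 2 * card (dual S (insert v B))"
    using card_Un_translate[OF finite_dual[OF assms(1)] dual_add] by simp
  then show ?case
    using insert B by simp
qed

lemma self_dual_has_dim:
  assumes "finite S" "lin_code S D" "dual S D = D"
  shows "has_dim D (card S div 2)"
proof -
  obtain B where B: "finite B" "B \<subseteq> D" "indep2 B" "span2 B = D"
    using lin_code_has_basis[OF assms(1,2)] by blast
  have "dual S B = D"
    using dual_span2[OF B(1)] B(4) assms(3) by simp
  then have "2 ^ card B * 2 ^ card B = (2::nat) ^ card S"
    using card_dual[OF assms(1) B(1) _ B(3)] card_span2[OF B(1,3)] B(2,4)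
      lin_code_subset_vecs[OF assms(2)] by auto
  then have "card B = card S div 2"
    by (simp flip: power_add)
  then show ?thesis
    unfolding has_dim_def using B by blast
qed

lemma self_orthogonal_extend:
  assumes "lin_code S D" "D \<subseteq> dual S D" "y \<in> dual S D" "ip S y y = 0"
  shows "lin_code S (D \<union> (\<lambda>d. d + y) ` D)" "D \<union> (\<lambda>d. d + y) ` D \<subseteq> dual S (D \<union> (\<lambda>d. d + y) ` D)"
proof -
  have ext: "D \<union> (\<lambda>d. d + y) ` D = {d + z | d z. d \<in> D \<and> z \<in> {0, y}}"
    by force
  have y: "y \<in> vecs S" "\<And>d. d \<in> D \<Longrightarrow> ip S d y = 0" "\<And>d. d \<in> D \<Longrightarrow> ip S y d = 0"
    using assms(3) by (auto simp: dual_def ip_comm)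
  show "lin_code S (D \<union> (\<lambda>d. d + y) ` D)"
    unfolding ext
  proof (rule lin_codeI)
    show "{d + z |d z. d \<in> D \<and> z \<in> {0, y}} \<subseteq> vecs S"
      using y(1) lin_code_subset_vecs[OF assms(1)] by (auto intro!: vecs_add)
    show "0 \<in> {d + z |d z. d \<in> D \<and> z \<in> {0, y}}"
      using lin_code_zero[OF assms(1)] by force
  next
    fix a b assume "a \<in> {d + z |d z. d \<in> D \<and> z \<in> {0, y}}" "b \<in> {d + z |d z. d \<in> D \<and> z \<in> {0, y}}"
    then obtain d1 d2 z1 z2 where "d1 \<in> D" "d2 \<in> D" "z1 \<in> {0, y}" "z2 \<in> {0, y}"
      and "a = d1 + z1" "b = d2 + z2"
      by blast
    moreover from this have "a + b = (d1 + d2) + (z1 + z2)"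
      by (simp add: add_ac)
    moreover have "z1 + z2 \<in> {0, y}" if "z1 \<in> {0, y}" "z2 \<in> {0, y}" for z1 z2
      using that by auto
    ultimately show "a + b \<in> {d + z |d z. d \<in> D \<and> z \<in> {0, y}}"
      using lin_code_add[OF assms(1)] by blast
  qed
  have "ip S (d1 + z1) (d2 + z2) = 0" if "d1 \<in> D" "d2 \<in> D" "z1 \<in> {0, y}" "z2 \<in> {0, y}"
    for d1 d2 z1 z2
    using that assms(2,4) y by (auto simp: ip_add_left ip_add_right dual_def)
  then show "D \<union> (\<lambda>d. d + y) ` D \<subseteq> dual S (D \<union> (\<lambda>d. d + y) ` D)"
    unfolding ext dual_def using y(1) lin_code_subset_vecs[OF assms(1)] by (auto intro!: vecs_add)
qed

lemma self_dual_if_maximal: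
  assumes "finite S" "even (card S)" "D \<subseteq> dual S D"
    and maximal: "\<And>y. y \<in> dual S D \<Longrightarrow> ip S y y = 0 \<Longrightarrow> y \<in> D"
  shows "dual S D = D"
proof -
  (* Over GF(2) ip d d = ip d ones, so ones is orthogonal to every self-orthogonal code, and it is
     self-orthogonal itself because card S is even. *)
  define ones where "ones = (\<lambda>i. if i \<in> S then 1 else 0 :: bit)"
  have "ip S ones ones = 0"
    using assms(1,2) by (simp add: ones_def ip_def)
  moreover have "ip S d ones = 0" if "d \<in> D" for d
    using assms(3) that ip_all_ones[of S d] by (auto simp: ones_def dual_def)
  then have "ones \<in> dual S D"
    by (simp add: dual_def vecs_def ones_def)
  ultimately have "ones \<in> D"
    by (rule maximal[rotated])
  have "y \<in> D" if y: "y \<in> dual S D" for y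
  proof (rule maximal[OF y])
    have "ip S ones y = 0"
      using y \<open>ones \<in> D\<close> by (simp add: dual_def)
    then show "ip S y y = 0"
      using ip_all_ones[of S y] ip_comm[of S ones y] by (simp add: ones_def)
  qed
  then show ?thesis
    using assms(3) by blast
qed

lemma exists_self_dual_superset:
  assumes "finite S" "even (card S)" "lin_code S A" "A \<subseteq> dual S A"
  shows "\<exists>D. lin_code S D \<and> A \<subseteq> D \<and> dual S D = D"
proof -
  let ?P = "\<lambda>D. lin_code S D \<and> D \<subseteq> dual S D \<and> A \<subseteq> D"
  have "\<exists>D. ?P D \<and> (\<forall>D'. ?P D' \<longrightarrow> card D' \<le> card D)"
    by (rule ex_has_greatest_nat[of _ A _ "Suc (card (vecs S))"])
       (use assms in \<open>auto simp: le_imp_less_Suc card_mono finite_vecs lin_code_subset_vecs\<close>)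
  then obtain D where D: "lin_code S D" "D \<subseteq> dual S D" "A \<subseteq> D"
    and max: "\<And>D'. ?P D' \<Longrightarrow> card D' \<le> card D"
    by blast
  have finD: "finite D"
    using assms(1) D(1) by (rule finite_lin_code)
  have "y \<in> D" if y: "y \<in> dual S D" "ip S y y = 0" for y
  proof (rule ccontr)
    assume "y \<notin> D"
    then have "card (D \<union> (\<lambda>d. d + y) ` D) = 2 * card D"
      using card_Un_translate[OF finD lin_code_add[OF D(1)]] by blast
    moreover have "card (D \<union> (\<lambda>d. d + y) ` D) \<le> card D"
      using max self_orthogonal_extend[OF D(1,2) y] D(3) by blast
    moreover have "card D > 0"
      using finD lin_code_zero[OF D(1)] card_gt_0_iff by blast
    ultimately show False
      by simp
  qed
  then have "dual S D = D"
    using self_dual_if_maximal[OF assms(1,2) D(2)] by blast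
  then show ?thesis
    using D by blast
qed

subsection \<open>A criterion for CSS-T pairs\<close>

lemma ip_eq_ip_supp_times:
  assumes "finite I" "x \<in> vecs I" "z \<in> vecs (supp x)"
  shows "ip I c z = ip (supp x) (x * c) z"
  using assms ip_vecs_subset[OF assms(1)] by (simp add: supp_subset_iff_vecs ip_supp_times_left)

lemma lin_code_times_image: "lin_code I C \<Longrightarrow> lin_code (supp x) ((\<lambda>c. x * c) ` C)"
  by (rule lin_codeI)
     (auto simp: times_in_vecs_supp lin_code_add distrib_left[symmetric]
       intro: image_eqI[where x = 0] lin_code_zero)

lemma self_dual_subset_dual_iff:
  assumes "finite I" "x \<in> vecs I" "Cx \<subseteq> vecs (supp x)" "dual (supp x) Cx = Cx"
  shows "Cx \<subseteq> dual I C \<longleftrightarrow> (\<lambda>c. x * c) ` C \<subseteq> Cx"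
proof -
  have "Cx \<subseteq> dual I C \<longleftrightarrow> (\<forall>c\<in>C. \<forall>z\<in>Cx. ip I c z = 0)"
    using assms(2,3) vecs_mono[of "supp x" I] by (auto simp: dual_def supp_subset_iff_vecs)
  also have "\<dots> \<longleftrightarrow> (\<forall>c\<in>C. \<forall>z\<in>Cx. ip (supp x) z (x * c) = 0)"
  proof -
    have "ip I c z = ip (supp x) z (x * c)" if "z \<in> Cx" for c z
      using that assms(3) ip_eq_ip_supp_times[OF assms(1,2)] ip_comm by (metis subsetD)
    then show ?thesis
      by simp
  qed
  also have "\<dots> \<longleftrightarrow> (\<lambda>c. x * c) ` C \<subseteq> dual (supp x) Cx"
    using times_in_vecs_supp by (auto simp: dual_def)
  finally show ?thesis
    using assms(4) by simp
qed

lemma schur_dual_iff_self_orthogonal: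
  assumes "finite I" "x \<in> vecs I"
  shows "x \<in> dual I {c * c' | c c'. c \<in> C \<and> c' \<in> C} \<longleftrightarrow>
    (\<lambda>c. x * c) ` C \<subseteq> dual (supp x) ((\<lambda>c. x * c) ` C)"
proof -
  have "x \<in> dual I {c * c' | c c'. c \<in> C \<and> c' \<in> C} \<longleftrightarrow> (\<forall>c\<in>C. \<forall>c'\<in>C. ip I (c * c') x = 0)"
    using assms(2) by (auto simp: dual_def)
  also have "\<dots> \<longleftrightarrow> (\<forall>c\<in>C. \<forall>c'\<in>C. ip (supp x) (x * c) (x * c') = 0)"
    by (metis ip_comm ip_supp_eq_ip_times[OF assms] ip_supp_times)
  also have "\<dots> \<longleftrightarrow> (\<lambda>c. x * c) ` C \<subseteq> dual (supp x) ((\<lambda>c. x * c) ` C)"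
    using times_in_vecs_supp by (auto simp: dual_def)
  finally show ?thesis .
qed

lemma css_t_pair_imp_schur_dual:
  assumes "finite I" "css_t_pair I C1 C2"
  shows "C2 \<subseteq> dual I {c * c' | c c'. c \<in> C1 \<and> c' \<in> C1}"
proof
  fix x assume x: "x \<in> C2"
  have xI: "x \<in> vecs I"
    using assms(2) x by (auto simp: css_t_pair_def lin_code_def)
  obtain Cx where Cx: "Cx \<subseteq> dual I C1" "Cx \<subseteq> vecs (supp x)" "dual (supp x) Cx = Cx"
    using assms(2) x unfolding css_t_pair_def by blast
  then have "(\<lambda>c. x * c) ` C1 \<subseteq> Cx"
    using self_dual_subset_dual_iff[OF assms(1) xI] by blast
  then have "(\<lambda>c. x * c) ` C1 \<subseteq> dual (supp x) ((\<lambda>c. x * c) ` C1)"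
    using dual_antimono[of "(\<lambda>c. x * c) ` C1" Cx "supp x"] Cx(3) by blast
  then show "x \<in> dual I {c * c' | c c'. c \<in> C1 \<and> c' \<in> C1}"
    using schur_dual_iff_self_orthogonal[OF assms(1) xI] by blast
qed

lemma css_t_pairI:
  assumes "finite I" "lin_code I C1" "lin_code I C2" "C2 \<subseteq> C1" "\<forall>x\<in>C2. even (hw x)"
    and schur: "C2 \<subseteq> dual I {c * c' | c c'. c \<in> C1 \<and> c' \<in> C1}"
  shows "css_t_pair I C1 C2"
proof -
  have "\<exists>Cx. lin_code I Cx \<and> Cx \<subseteq> dual I C1 \<and> has_dim Cx (hw x div 2) \<and>
          Cx \<subseteq> vecs (supp x) \<and> dual (supp x) Cx = Cx" if x: "x \<in> C2" for x
  proof -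
    have xI: "x \<in> vecs I"
      using x assms(3) lin_code_subset_vecs by blast
    then have SI: "supp x \<subseteq> I"
      by (simp add: supp_subset_iff_vecs)
    have "even (card (supp x))"
      using assms(5) x by (simp add: hw_def)
    moreover have "lin_code (supp x) ((\<lambda>c. x * c) ` C1)"
      using assms(2) by (rule lin_code_times_image)
    moreover have "(\<lambda>c. x * c) ` C1 \<subseteq> dual (supp x) ((\<lambda>c. x * c) ` C1)"
      using schur x schur_dual_iff_self_orthogonal[OF assms(1) xI] by blast
    ultimately have "\<exists>D. lin_code (supp x) D \<and> (\<lambda>c. x * c) ` C1 \<subseteq> D \<and> dual (supp x) D = D"
      by (rule exists_self_dual_superset[OF finite_subset[OF SI assms(1)]])
    then obtain D where D: "lin_code (supp x) D" "(\<lambda>c. x * c) ` C1 \<subseteq> D" "dual (supp x) D = D"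
      by blast
    have "D \<subseteq> dual I C1"
      using self_dual_subset_dual_iff[OF assms(1) xI lin_code_subset_vecs[OF D(1)] D(3)] D(2) by blast
    moreover have "has_dim D (hw x div 2)"
      using self_dual_has_dim[OF finite_subset[OF SI assms(1)] D(1,3)] by (simp add: hw_def)
    ultimately show ?thesis
      using D lin_code_mono[OF D(1) SI] lin_code_subset_vecs by blast
  qed
  then show ?thesis
    using assms unfolding css_t_pair_def by blast
qed

lemma css_t_pair_iff_schur_dual:
  assumes "finite I"
  shows "css_t_pair I C1 C2 \<longleftrightarrow>
    lin_code I C1 \<and> lin_code I C2 \<and> C2 \<subseteq> C1 \<and> (\<forall>x\<in>C2. even (hw x)) \<and>
    C2 \<subseteq> dual I {c * c' | c c'. c \<in> C1 \<and> c' \<in> C1}"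
proof
  assume css: "css_t_pair I C1 C2"
  then show "lin_code I C1 \<and> lin_code I C2 \<and> C2 \<subseteq> C1 \<and> (\<forall>x\<in>C2. even (hw x)) \<and>
    C2 \<subseteq> dual I {c * c' | c c'. c \<in> C1 \<and> c' \<in> C1}"
    using css_t_pair_imp_schur_dual[OF assms css] unfolding css_t_pair_def by blast
qed (use css_t_pairI[OF assms] in blast)

subsection \<open>Reed--Muller codes\<close>

lemma pts_eq_vecs: "pts m = vecs {..<m}"
  by (auto simp: pts_def vecs_def)

lemma finite_pts: "finite (pts m)"
  by (simp add: pts_eq_vecs finite_vecs)

definition mon :: "nat \<Rightarrow> (nat \<Rightarrow> nat) \<Rightarrow> (nat \<Rightarrow> bit) \<Rightarrow> bit" where
  "mon m e p = (\<Prod>i<m. p i ^ e i)"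

lemma mon_add: "mon m (e + e') p = mon m e p * mon m e' p"
  by (simp only: mon_def plus_fun_apply power_add prod.distrib)

lemma RM_iff: "x \<in> RM r m \<longleftrightarrow>
    (\<exists>c. x = (\<lambda>p. if p \<in> pts m then \<Sum>e\<in>rm_monos m r. c e * mon m e p else 0))"
  unfolding RM_def mon_def by blast

lemma finite_rm_monos: "finite (rm_monos m r)"
proof -
  have "e i \<le> r" if "e \<in> rm_monos m r" "i < m" for e i
    using that member_le_sum[of i "{..<m}" e] by (auto simp: rm_monos_def)
  then have "rm_monos m r \<subseteq> {e. \<forall>i. (i \<in> {..<m} \<longrightarrow> e i \<in> {..r}) \<and> (i \<notin> {..<m} \<longrightarrow> e i = 0)}"
    by (auto simp: rm_monos_def)
  then show ?thesis
    using finite_set_of_finite_funs[of "{..<m}" "{..r}" 0] finite_subset by blast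
qed

lemma add_in_rm_monos: "e \<in> rm_monos m r \<Longrightarrow> e' \<in> rm_monos m r' \<Longrightarrow> e + e' \<in> rm_monos m (r + r')"
  by (auto simp: rm_monos_def sum.distrib)

lemma RM_subset_vecs: "RM r m \<subseteq> vecs (pts m)"
  by (auto simp: RM_def vecs_def)

lemma RM_monomial:
  assumes "e \<in> rm_monos m r"
  shows "(\<lambda>p. if p \<in> pts m then a * mon m e p else 0) \<in> RM r m"
proof -
  have "(\<Sum>e'\<in>rm_monos m r. (if e' = e then a else 0) * mon m e' p) =
        (\<Sum>e'\<in>rm_monos m r. if e' = e then a * mon m e' p else 0)" for p
    by (intro sum.cong) auto
  then have delta: "a * mon m e p = (\<Sum>e'\<in>rm_monos m r. (if e' = e then a else 0) * mon m e' p)" for p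
    using assms finite_rm_monos by simp
  show ?thesis
    unfolding RM_iff delta by (rule exI) (rule refl)
qed

lemma lin_code_RM: "lin_code (pts m) (RM r m)"
proof (rule lin_codeI)
  show "0 \<in> RM r m"
    unfolding RM_iff by (rule exI[of _ "\<lambda>_. 0"]) (simp add: fun_eq_iff)
  show "x + y \<in> RM r m" if xy: "x \<in> RM r m" "y \<in> RM r m" for x y
  proof -
    obtain a b where
      "x = (\<lambda>p. if p \<in> pts m then \<Sum>e\<in>rm_monos m r. a e * mon m e p else 0)"
      "y = (\<lambda>p. if p \<in> pts m then \<Sum>e\<in>rm_monos m r. b e * mon m e p else 0)"
      using xy unfolding RM_iff by blast
    then have "x + y = (\<lambda>p. if p \<in> pts m then \<Sum>e\<in>rm_monos m r. (a e + b e) * mon m e p else 0)"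
      by (simp add: fun_eq_iff distrib_right sum.distrib)
    then show ?thesis
      unfolding RM_iff by (rule exI[of _ "\<lambda>e. a e + b e"])
  qed
qed (rule RM_subset_vecs)

lemma RM_mono:
  assumes "r \<le> r'"
  shows "RM r m \<subseteq> RM r' m"
proof
  fix x assume "x \<in> RM r m"
  then obtain c where x: "x = (\<lambda>p. if p \<in> pts m then \<Sum>e\<in>rm_monos m r. c e * mon m e p else 0)"
    unfolding RM_iff by blast
  have sub: "rm_monos m r \<subseteq> rm_monos m r'"
    using assms by (auto simp: rm_monos_def)
  have "(\<Sum>e\<in>rm_monos m r. c e * mon m e p) =
        (\<Sum>e\<in>rm_monos m r'. (if e \<in> rm_monos m r then c e else 0) * mon m e p)" for p
    by (rule sum.mono_neutral_cong_left[OF finite_rm_monos sub]) auto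
  then show "x \<in> RM r' m"
    unfolding x RM_iff by (auto intro!: exI)
qed

lemma RM_times:
  assumes "x \<in> RM ra m" "y \<in> RM rb m"
  shows "x * y \<in> RM (ra + rb) m"
proof -
  obtain a b where
    x: "x = (\<lambda>p. if p \<in> pts m then \<Sum>e\<in>rm_monos m ra. a e * mon m e p else 0)" and
    y: "y = (\<lambda>p. if p \<in> pts m then \<Sum>e\<in>rm_monos m rb. b e * mon m e p else 0)"
    using assms unfolding RM_iff by blast
  have "x * y = (\<Sum>e\<in>rm_monos m ra. \<Sum>e'\<in>rm_monos m rb.
                   (\<lambda>p. if p \<in> pts m then (a e * b e') * mon m (e + e') p else 0))"
    by (auto simp: fun_eq_iff sum_fun_apply x y sum_product mon_add mult_ac)
  also have "\<dots> \<in> RM (ra + rb) m"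
    by (intro lin_code_sum[OF lin_code_RM] RM_monomial add_in_rm_monos)
  finally show ?thesis .
qed

lemma sum_mon_eq_0:
  assumes "j < m" "e j = 0"
  shows "(\<Sum>p\<in>pts m. mon m e p) = 0"
proof (rule sum_involution_eq_0[where h = "\<lambda>p. p(j := p j + 1)"])
  fix p assume p: "p \<in> pts m"
  have "mon m e (p(j := b)) = mon m e p" for b
    unfolding mon_def using assms(2) by (intro prod.cong) auto
  then show "mon m e (p(j := p j + 1)) + mon m e p = 0"
    by simp
  show "p(j := p j + 1) \<in> pts m"
    using assms(1) p by (auto simp: pts_def)
  show "(p(j := p j + 1))(j := (p(j := p j + 1)) j + 1) = p"
    by (simp add: add.assoc)
  show "p(j := p j + 1) \<noteq> p"
    by (metis add_cancel_left_right fun_upd_same one_neq_zero)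
qed

lemma sum_RM_eq_0:
  assumes "r < m" "x \<in> RM r m"
  shows "(\<Sum>p\<in>pts m. x p) = 0"
proof -
  obtain c where x: "x = (\<lambda>p. if p \<in> pts m then \<Sum>e\<in>rm_monos m r. c e * mon m e p else 0)"
    using assms(2) unfolding RM_iff by blast
  have "(\<Sum>p\<in>pts m. mon m e p) = 0" if e: "e \<in> rm_monos m r" for e
  proof -
    have "\<exists>j<m. e j = 0"
    proof (rule ccontr)
      assume "\<not> (\<exists>j<m. e j = 0)"
      then have "(\<Sum>i<m. 1) \<le> (\<Sum>i<m. e i)"
        by (intro sum_mono) (simp add: Suc_le_eq)
      then show False
        using e assms(1) by (simp add: rm_monos_def)
    qed
    then show ?thesis
      using sum_mon_eq_0 by blast
  qed
  then have "(\<Sum>e\<in>rm_monos m r. \<Sum>p\<in>pts m. c e * mon m e p) = 0"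
    by (simp add: sum_distrib_left[symmetric])
  then show ?thesis
    by (simp add: x sum.swap[of _ "pts m"])
qed

lemma even_hw_RM:
  assumes "r < m" "x \<in> RM r m"
  shows "even (hw x)"
  using sum_RM_eq_0[OF assms] sum_eq_of_nat_hw[OF finite_pts, of x m] assms(2) RM_subset_vecs
  by auto

definition monomial_word :: "nat \<Rightarrow> nat set \<Rightarrow> (nat \<Rightarrow> bit) \<Rightarrow> bit" where
  "monomial_word m J = (\<lambda>p. if p \<in> pts m then \<Prod>i\<in>J. p i else 0)"

lemma monomial_word_in_RM:
  assumes "J \<subseteq> {..<m}" "card J \<le> r"
  shows "monomial_word m J \<in> RM r m"
proof -
  define e where "e = (\<lambda>i. if i \<in> J then 1 else 0 :: nat)"
  have "(\<Sum>i<m. e i) = card J"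
    using assms(1) by (simp add: e_def sum.If_cases Int_absorb1)
  then have "e \<in> rm_monos m r"
    using assms by (auto simp: rm_monos_def e_def)
  moreover have mon_e: "mon m e p = (\<Prod>i\<in>J. p i)" for p
  proof -
    have "mon m e p = (\<Prod>i<m. if i \<in> J then p i else 1)"
      unfolding mon_def e_def by (intro prod.cong) auto
    also have "\<dots> = (\<Prod>i\<in>J. p i)"
      using assms(1) by (simp add: prod.If_cases Int_absorb1)
    finally show ?thesis .
  qed
  ultimately show ?thesis
    using RM_monomial[of e m r 1] by (simp add: monomial_word_def mon_e cong: if_cong)
qed

lemma sum_pts_prod_eq_1: "(\<Sum>p\<in>pts m. \<Prod>i<m. p i) = (1::bit)"
proof -
  define ones where "ones = (\<lambda>i. if i < m then 1 else 0 :: bit)"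
  have "(\<Prod>i<m. p i) = (if p = ones then 1 else 0)" if "p \<in> pts m" for p
  proof -
    have "p = ones \<longleftrightarrow> (\<forall>i<m. p i = 1)"
      using that by (auto simp: ones_def pts_def fun_eq_iff)
    then show ?thesis
      by auto
  qed
  moreover have "ones \<in> pts m"
    by (simp add: ones_def pts_def)
  ultimately show ?thesis
    using finite_pts by (simp add: sum.delta')
qed

lemma RM_subset_schur_dual_iff:
  "RM r2 m \<subseteq> dual (pts m) {c * c' | c c'. c \<in> RM r1 m \<and> c' \<in> RM r1 m} \<longleftrightarrow> 2 * r1 + r2 < m"
proof
  assume deg: "2 * r1 + r2 < m"
  have "ip (pts m) (c * c') x = 0" if "x \<in> RM r2 m" "c \<in> RM r1 m" "c' \<in> RM r1 m" for x c c'
  proof -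
    have "c * c' * x \<in> RM (r1 + r1 + r2) m"
      using that by (intro RM_times)
    then have "(\<Sum>p\<in>pts m. (c * c' * x) p) = 0"
      by (rule sum_RM_eq_0[rotated]) (use deg in simp)
    then show ?thesis
      by (simp add: ip_def)
  qed
  then show "RM r2 m \<subseteq> dual (pts m) {c * c' | c c'. c \<in> RM r1 m \<and> c' \<in> RM r1 m}"
    using RM_subset_vecs[of r2 m] by (auto simp: dual_def)
next
  assume schur: "RM r2 m \<subseteq> dual (pts m) {c * c' | c c'. c \<in> RM r1 m \<and> c' \<in> RM r1 m}"
  show "2 * r1 + r2 < m"
  proof (rule ccontr)
    assume "\<not> 2 * r1 + r2 < m"
    define a where "a = min r2 m"
    define b where "b = min (r2 + r1) m"
    let ?x = "monomial_word m {0..<a}" and ?c = "monomial_word m {a..<b}"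
      and ?c' = "monomial_word m {b..<m}"
    have "?x \<in> RM r2 m" "?c \<in> RM r1 m" "?c' \<in> RM r1 m"
      using \<open>\<not> 2 * r1 + r2 < m\<close> by (auto simp: a_def b_def intro!: monomial_word_in_RM)
    then have "ip (pts m) (?c * ?c') ?x = 0"
      using schur by (auto simp: dual_def)
    moreover have "(?c * ?c' * ?x) p = (\<Prod>i<m. p i)" if "p \<in> pts m" for p
    proof -
      have "a \<le> b" "b \<le> m"
        by (auto simp: a_def b_def)
      then have "(\<Prod>i\<in>{0..<a}. p i) * (\<Prod>i\<in>{a..<b}. p i) * (\<Prod>i\<in>{b..<m}. p i) = (\<Prod>i<m. p i)"
        by (simp add: prod.atLeastLessThan_concat flip: atLeast0LessThan)
      then show ?thesis
        using that by (simp add: monomial_word_def mult_ac)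
    qed
    ultimately show False
      using sum_pts_prod_eq_1[of m] by (simp add: ip_def)
  qed
qed

lemma degree_bound_iff_parity:
  fixes m t r2 :: nat
  assumes "m \<ge> 2" "r2 + t \<le> (m - 1) div 2"
  shows "2 * ((m - 1) div 2 - t) + r2 < m \<longleftrightarrow> (if even m then r2 \<le> 2 * t + 1 else r2 \<le> 2 * t)"
proof (cases "even m")
  case True
  then obtain b where b: "m = 2 * b"
    by (auto elim: evenE)
  then have "(m - 1) div 2 = b - 1"
    by (cases b) auto
  then show ?thesis
    using True b assms by auto
next
  case False
  then obtain b where "m = 2 * b + 1" "(m - 1) div 2 = b"
    by (auto elim: oddE)
  then show ?thesis
    using False assms(2) by auto
qed

theorem mainTheorem3:
  fixes m t r2 :: nat
  assumes "m \<ge> 2" and "r2 + t \<le> (m - 1) div 2"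
  shows "css_t_pair (pts m) (RM ((m - 1) div 2 - t) m) (RM r2 m) \<longleftrightarrow>
         (if even m then r2 \<le> 2 * t + 1 else r2 \<le> 2 * t)"
proof -
  define r1 where "r1 = (m - 1) div 2 - t"
  have "r2 \<le> r1" "r2 < m"
    using assms by (auto simp: r1_def)
  then have "css_t_pair (pts m) (RM r1 m) (RM r2 m) \<longleftrightarrow> 2 * r1 + r2 < m"
    by (simp add: css_t_pair_iff_schur_dual[OF finite_pts] lin_code_RM RM_mono even_hw_RM
        RM_subset_schur_dual_iff)
  then show ?thesis
    using degree_bound_iff_parity[OF assms] by (simp add: r1_def)
qed

end
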